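(* Assume the standing setting described in the context. For $x\in\Lambda_\varepsilon$ and a bounded set $A\subset[0,\infty)$ let $\mathbbm{n}^\varepsilon_A(x):=\#\{t\in A:\Delta_t\mathbb{M}_\varepsilon(x)\neq0\}$ be the number of jumps of $\mathbb{M}_\varepsilon(x)$ in $A$. Then for any $[a,b]\subset[0,\infty)$ and any $p\ge1$, $$\sup_{\varepsilon\in(0,1]}\sup_{x\in\Lambda_\varepsilon}\mathbb{E}\Big[\big|\mathbbm{n}^\varepsilon_{[\varepsilon^{d+2\mathbf{k}}a,\,\varepsilon^{d+2\mathbf{k}}b]}(x)\big|^p\Big]^{1/p}<\infty,$$ locally uniformly in $a,b$ (the supremum over $\varepsilon$ is over those $\varepsilon$ with $\varepsilon^{-1}\in\mathbb{N}$).
   Context: Standing setting. Fix $d\in\mathbb{N}$. For $\varepsilon\in(0,1]$ with $\varepsilon^{-1}\in\mathbb{N}$ let $\Lambda_\varepsilon=(\varepsilon\mathbb{Z}/\mathbb{Z})^d$. On a filtered probability space satisfying the usual conditions, for each such $\varepsilon$ let $(\mathbb{M}_\varepsilon(t,x))_{t\ge0}$, $x\in\Lambda_\varepsilon$, be càdlàg square-integrable martingales; $\Delta_t\mathbb{M}_\varepsilon(x)=\mathbb{M}_\varepsilon(t,x)-\mathbb{M}_\varepsilon(t-,x)$; $\langle\cdot,\cdot\rangle$ is the predictable quadratic covariation. All constants below are non-random and independent of $\varepsilon,s,t,x$: (A1) $\langle \mathbb{M}_\varepsilon(x),\mathbb{M}_\varepsilon(y)\rangle_t=0$ for $x\neq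 y$, and $\langle\mathbb{M}_\varepsilon(x)\rangle_t=\varepsilon^{-d}\int_0^t\mathcal{C}_\varepsilon(s,x)\,ds$ with $\mathcal{C}_\varepsilon$ progressively measurable, $|\mathcal{C}_\varepsilon|\le C$ a.s.; (A2) for every $T>0$, a.s. $\Delta_t\mathbb{M}_\varepsilon(x)\Delta_t\mathbb{M}_\varepsilon(y)=0$ for all $x\ne y$, $t\in[0,T]$; (A3) there exist $\mathbf{k}>-d/2$ and $c>0$ such that a.s. $|\Delta_t\mathbb{M}_\varepsilon(x)|=c\varepsilon^{\mathbf{k}}$ whenever $\Delta_t\mathbb{M}_\varepsilon(x)\ne0$; (A4) $\mathbb{M}_\varepsilon(t,x)=\sum_{0\le s\le t}\Delta_s\mathbb{M}_\varepsilon(x)-\varepsilon^{-\mathbf{k}-d}\int_0^t\mathtt{C}_\varepsilon(s,x)\,ds$ with $\mathtt{C}_\varepsilon$ progressively measurable, $|\mathtt{C}_\varepsilon|\le C$ a.s. *)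

theory Defs
  imports "HOL-Probability.Probability"
begin

text \<open>Lattice (eps Z / Z)^d with eps = 1/N, encoded as {0..N-1}^d (coordinates beyond d are 0).\<close>
definition lattice :: "nat \<Rightarrow> nat \<Rightarrow> (nat \<Rightarrow> nat) set" where
  "lattice N d = {x. (\<forall>i<d. x i < N) \<and> (\<forall>i\<ge>d. x i = 0)}"

definition filtration :: "'a measure \<Rightarrow> (real \<Rightarrow> 'a measure) \<Rightarrow> bool" where
  "filtration M F \<longleftrightarrow> (\<forall>t\<ge>0. subalgebra M (F t)) \<and>
     (\<forall>s t. 0 \<le> s \<longrightarrow> s \<le> t \<longrightarrow> sets (F s) \<subseteq> sets (F t))"

definition usual_conditions :: "'a measure \<Rightarrow> (real \<Rightarrow> 'a measure) \<Rightarrow> bool" where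
  "usual_conditions M F \<longleftrightarrow> complete_measure M \<and> null_sets M \<subseteq> sets (F 0) \<and>
     (\<forall>t\<ge>0. sets (F t) = (\<Inter>s\<in>{t<..}. sets (F s)))"

definition adapted :: "'a measure \<Rightarrow> (real \<Rightarrow> 'a measure) \<Rightarrow> (real \<Rightarrow> 'a \<Rightarrow> real) \<Rightarrow> bool" where
  "adapted M F X \<longleftrightarrow> (\<forall>t\<ge>0. X t \<in> borel_measurable (F t))"

definition martingale :: "'a measure \<Rightarrow> (real \<Rightarrow> 'a measure) \<Rightarrow> (real \<Rightarrow> 'a \<Rightarrow> real) \<Rightarrow> bool" where
  "martingale M F X \<longleftrightarrow> adapted M F X \<and> (\<forall>t\<ge>0. integrable M (X t)) \<and>
     (\<forall>s t. 0 \<le> s \<longrightarrow> s \<le> t \<longrightarrow> (AE \<omega> in M. real_cond_exp M (F s) (X t) \<omega> = X s \<omega>))"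

definition square_integrable :: "'a measure \<Rightarrow> (real \<Rightarrow> 'a \<Rightarrow> real) \<Rightarrow> bool" where
  "square_integrable M X \<longleftrightarrow> (\<forall>t\<ge>0. integrable M (\<lambda>\<omega>. (X t \<omega>)\<^sup>2))"

definition cadlag :: "(real \<Rightarrow> real) \<Rightarrow> bool" where
  "cadlag f \<longleftrightarrow> (\<forall>t\<ge>0. continuous (at_right t) f \<and> (t > 0 \<longrightarrow> (\<exists>l. (f \<longlongrightarrow> l) (at_left t))))"

text \<open>Jump f(t) - f(t-), with the convention f(0-) = f(0).\<close>
definition jump :: "(real \<Rightarrow> real) \<Rightarrow> real \<Rightarrow> real" where
  "jump f t = (if t > 0 then f t - Lim (at_left t) f else 0)"

definition finite_variation :: "(real \<Rightarrow> real) \<Rightarrow> bool" where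
  "finite_variation f \<longleftrightarrow> (\<forall>t\<ge>0. \<exists>g h. mono_on {0..t} g \<and> mono_on {0..t} h \<and>
      (\<forall>s\<in>{0..t}. f s = g s - h s))"

definition progressive :: "'a measure \<Rightarrow> (real \<Rightarrow> 'a measure) \<Rightarrow> (real \<Rightarrow> 'a \<Rightarrow> real) \<Rightarrow> bool" where
  "progressive M F X \<longleftrightarrow> (\<forall>t\<ge>0. (\<lambda>(s, \<omega>). X s \<omega>) \<in>
      borel_measurable (restrict_space (borel \<Otimes>\<^sub>M F t) ({0..t} \<times> space M)))"

definition predictable_sigma :: "'a measure \<Rightarrow> (real \<Rightarrow> 'a measure) \<Rightarrow> (real \<times> 'a) measure" where
  "predictable_sigma M F = sigma ({0..} \<times> space M)
     ({{0} \<times> A | A. A \<in> sets (F 0)} \<union> {{s<..t} \<times> A | s t A. 0 \<le> s \<and> s < t \<and> A \<in> sets (F s)})"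

definition is_pred_qcov :: "'a measure \<Rightarrow> (real \<Rightarrow> 'a measure) \<Rightarrow> (real \<Rightarrow> 'a \<Rightarrow> real) \<Rightarrow>
    (real \<Rightarrow> 'a \<Rightarrow> real) \<Rightarrow> (real \<Rightarrow> 'a \<Rightarrow> real) \<Rightarrow> bool" where
  "is_pred_qcov M F X Y A \<longleftrightarrow>
     (\<lambda>(t, \<omega>). A t \<omega>) \<in> borel_measurable (predictable_sigma M F) \<and>
     (\<forall>\<omega>\<in>space M. A 0 \<omega> = 0) \<and>
     (AE \<omega> in M. cadlag (\<lambda>t. A t \<omega>) \<and> finite_variation (\<lambda>t. A t \<omega>)) \<and>
     martingale M F (\<lambda>t \<omega>. X t \<omega> * Y t \<omega> - A t \<omega>)"

definition njumps :: "(real \<Rightarrow> real) \<Rightarrow> real set \<Rightarrow> nat" where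
  "njumps f S = card {t\<in>S. jump f t \<noteq> 0}"

end

theory Submission
  imports Defs
begin

(* Fix N = 1/eps and a site x, and write X for the martingale M_eps(x).  Its compensator
   A = N^d * int CC has increments at most |C| N^d (t - s), and every jump of X has size
   delta = c eps^k.  Cut the window [0, v], v = eps^(d+2k) b, into m cells.  For m large every
   jump lies in its own cell and forces an increment of at least delta/2 there, so the number of
   jumps is eventually at most the number of such large cell increments.  As X^2 - A is a
   martingale, conditional Chebyshev bounds the conditional probability of a large increment in a
   cell by q = 4 |C| N^d (v/m) / delta^2.  Since e^xi <= 1 + 2 xi for xi in {0, 1}, conditioning
   cell by cell gives E exp(count) <= (1 + 2q)^m <= exp(2 m q) = exp(8 |C| b / c^2), where all
   powers of eps cancel.  Finally n^p <= P^P e^n for P = ceil p, and Fatou's lemma in m. *)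

lemma integrable_mult_of_squares:
  fixes f g :: "'a \<Rightarrow> real"
  assumes "integrable M (\<lambda>x. (f x)\<^sup>2)" "integrable M (\<lambda>x. (g x)\<^sup>2)"
    and "f \<in> borel_measurable M" "g \<in> borel_measurable M"
  shows "integrable M (\<lambda>x. f x * g x)"
proof (rule Bochner_Integration.integrable_bound[where f="\<lambda>x. (f x)\<^sup>2 + (g x)\<^sup>2"])
  show "integrable M (\<lambda>x. (f x)\<^sup>2 + (g x)\<^sup>2)" using assms(1,2) by simp
  show "(\<lambda>x. f x * g x) \<in> borel_measurable M" using assms(3,4) by measurable
  have "\<bar>f x * g x\<bar> \<le> (f x)\<^sup>2 + (g x)\<^sup>2" for x
  proof -
    have "2 * (\<bar>f x\<bar> * \<bar>g x\<bar>) \<le> (f x)\<^sup>2 + (g x)\<^sup>2"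
      using sum_squares_bound[of "\<bar>f x\<bar>" "\<bar>g x\<bar>"] by simp
    moreover have "0 \<le> \<bar>f x\<bar> * \<bar>g x\<bar>" by simp
    ultimately show ?thesis unfolding abs_mult by linarith
  qed
  then show "AE x in M. norm (f x * g x) \<le> norm ((f x)\<^sup>2 + (g x)\<^sup>2)" by simp
qed

lemma integrable_bounded_mult:
  fixes f Z :: "'a \<Rightarrow> real"
  assumes "integrable M f" "Z \<in> borel_measurable M" "\<And>x. \<bar>Z x\<bar> \<le> Zb"
  shows "integrable M (\<lambda>x. Z x * f x)"
proof (rule Bochner_Integration.integrable_bound[where f="\<lambda>x. Zb * f x"])
  show "integrable M (\<lambda>x. Zb * f x)" using assms(1) by simp
  show "(\<lambda>x. Z x * f x) \<in> borel_measurable M" using assms(1,2) by measurable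
  have "\<bar>Z x\<bar> * \<bar>f x\<bar> \<le> \<bar>Zb\<bar> * \<bar>f x\<bar>" for x
    using assms(3)[of x] by (intro mult_right_mono) auto
  then show "AE x in M. norm (Z x * f x) \<le> norm (Zb * f x)" by (simp add: abs_mult)
qed

lemma filtration_subalgebra:
  "filtration M F \<Longrightarrow> 0 \<le> r \<Longrightarrow> subalgebra M (F r)"
  unfolding filtration_def by blast

lemma filtration_subalgebra_later:
  assumes "filtration M F" "0 \<le> r" "r \<le> r'"
  shows "subalgebra (F r') (F r)"
  using assms unfolding filtration_def subalgebra_def by auto

lemma martingale_measurable:
  assumes "filtration M F" "martingale M F X" "0 \<le> r" "r \<le> r'"
  shows "X r \<in> borel_measurable (F r')"
proof -
  have "X r \<in> borel_measurable (F r)" using assms(2,3) unfolding martingale_def adapted_def by blast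
  then show ?thesis using measurable_from_subalg filtration_subalgebra_later[OF assms(1,3,4)] by blast
qed

lemma martingale_borel_measurable:
  "filtration M F \<Longrightarrow> martingale M F X \<Longrightarrow> 0 \<le> r \<Longrightarrow> X r \<in> borel_measurable M"
  using martingale_measurable[of M F X r r] measurable_from_subalg filtration_subalgebra by blast

lemma filtration_sigma_finite_subalgebra:
  assumes "prob_space M" "filtration M F" "0 \<le> r"
  shows "sigma_finite_subalgebra M (F r)"
proof (rule finite_measure_subalgebra_is_sigma_finite)
  interpret prob_space M by fact
  show "finite_measure_subalgebra M (F r)"
    by unfold_locales (rule filtration_subalgebra[OF assms(2,3)])
qed

lemma integral_mult_cond_exp_eq:
  fixes Z Y Y' :: "'a \<Rightarrow> real"
  assumes "sigma_finite_subalgebra M G" "integrable M (\<lambda>w. Z w * Y w)"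
    and "Z \<in> borel_measurable G" "Y \<in> borel_measurable M" "Y' \<in> borel_measurable M"
    and "AE w in M. real_cond_exp M G Y w = Y' w"
  shows "(\<integral>w. Z w * Y w \<partial>M) = (\<integral>w. Z w * Y' w \<partial>M)"
proof -
  interpret sigma_finite_subalgebra M G by fact
  have "(\<integral>w. Z w * Y w \<partial>M) = (\<integral>w. Z w * real_cond_exp M G Y w \<partial>M)"
    using real_cond_exp_intg(2)[OF assms(2-4)] by simp
  also have "\<dots> = (\<integral>w. Z w * Y' w \<partial>M)"
  proof (rule integral_cong_AE)
    have [measurable]: "Z \<in> borel_measurable M" by (rule measurable_from_subalg[OF subalg assms(3)])
    show "(\<lambda>w. Z w * real_cond_exp M G Y w) \<in> borel_measurable M" by measurable
    show "(\<lambda>w. Z w * Y' w) \<in> borel_measurable M" using assms(5) by measurable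
    show "AE w in M. Z w * real_cond_exp M G Y w = Z w * Y' w" using assms(6) by auto
  qed
  finally show ?thesis .
qed

lemma martingale_integral_mult_eq:
  fixes Z :: "'a \<Rightarrow> real"
  assumes "prob_space M" "filtration M F" "martingale M F Y" "0 \<le> s" "s \<le> t"
    and "Z \<in> borel_measurable (F s)" "\<And>w. \<bar>Z w\<bar> \<le> Zb"
  shows "(\<integral>w. Z w * Y t w \<partial>M) = (\<integral>w. Z w * Y s w \<partial>M)"
proof (rule integral_mult_cond_exp_eq[OF filtration_sigma_finite_subalgebra[OF assms(1,2,4)]])
  show "integrable M (\<lambda>w. Z w * Y t w)"
  proof (rule integrable_bounded_mult[OF _ _ assms(7)])
    show "integrable M (Y t)" using assms(3-5) unfolding martingale_def by simp
    show "Z \<in> borel_measurable M"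
      by (rule measurable_from_subalg[OF filtration_subalgebra[OF assms(2,4)] assms(6)])
  qed
  show "AE w in M. real_cond_exp M (F s) (Y t) w = Y s w"
    using assms(3-5) unfolding martingale_def by blast
qed (use assms(2-6) martingale_borel_measurable[OF assms(2,3)] in simp_all)

lemma martingale_integral_mult_cross_eq:
  fixes X :: "real \<Rightarrow> 'a \<Rightarrow> real" and Z :: "'a \<Rightarrow> real"
  assumes prob: "prob_space M" and filt: "filtration M F"
    and X: "martingale M F X" "square_integrable M X" and st: "0 \<le> s" "s \<le> t"
    and Z: "Z \<in> borel_measurable (F s)" "\<And>w. \<bar>Z w\<bar> \<le> Zb"
  shows "integrable M (\<lambda>w. Z w * (X s w * X t w))"
    and "(\<integral>w. Z w * (X s w * X t w) \<partial>M) = (\<integral>w. Z w * (X s w)\<^sup>2 \<partial>M)"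
proof -
  have t: "0 \<le> t" using st by linarith
  have [measurable]: "Z \<in> borel_measurable M" "X s \<in> borel_measurable M" "X t \<in> borel_measurable M"
    using measurable_from_subalg[OF filtration_subalgebra[OF filt st(1)] Z(1)]
      martingale_borel_measurable[OF filt X(1)] st t by auto
  have "integrable M (\<lambda>w. X s w * X t w)"
    by (rule integrable_mult_of_squares) (use X(2) st t in \<open>simp_all add: square_integrable_def\<close>)
  from integrable_bounded_mult[OF this _ Z(2)]
  show "integrable M (\<lambda>w. Z w * (X s w * X t w))" by simp
  have "(\<integral>w. (Z w * X s w) * X t w \<partial>M) = (\<integral>w. (Z w * X s w) * X s w \<partial>M)"
  proof (rule integral_mult_cond_exp_eq[OF filtration_sigma_finite_subalgebra[OF prob filt st(1)]])
    show "integrable M (\<lambda>w. Z w * X s w * X t w)"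
      using \<open>integrable M (\<lambda>w. Z w * (X s w * X t w))\<close> by (simp add: mult.assoc)
    show "(\<lambda>w. Z w * X s w) \<in> borel_measurable (F s)"
      using Z(1) martingale_measurable[OF filt X(1) st(1) order.refl] by measurable
    show "AE w in M. real_cond_exp M (F s) (X t) w = X s w"
      using X(1) st unfolding martingale_def by blast
  qed simp_all
  then show "(\<integral>w. Z w * (X s w * X t w) \<partial>M) = (\<integral>w. Z w * (X s w)\<^sup>2 \<partial>M)"
    by (simp add: power2_eq_square mult.assoc)
qed

lemma compensator_integrable:
  assumes "square_integrable M X" "martingale M F (\<lambda>r w. X r w * X r w - A r w)" "0 \<le> r"
  shows "integrable M (A r)"
proof -
  have "integrable M (\<lambda>w. (X r w)\<^sup>2 - (X r w * X r w - A r w))"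
    using assms unfolding square_integrable_def martingale_def by simp
  then show ?thesis by (simp add: power2_eq_square)
qed

lemma martingale_increment_weighted_square:
  fixes X A :: "real \<Rightarrow> 'a \<Rightarrow> real" and Z :: "'a \<Rightarrow> real"
  assumes prob: "prob_space M" and filt: "filtration M F"
    and X: "martingale M F X" "square_integrable M X"
    and W: "martingale M F (\<lambda>r w. X r w * X r w - A r w)"
    and st: "0 \<le> s" "s \<le> t" and Z: "Z \<in> borel_measurable (F s)" "\<And>w. \<bar>Z w\<bar> \<le> Zb"
  shows "integrable M (\<lambda>w. Z w * (A t w - A s w))"
    and "has_bochner_integral M (\<lambda>w. Z w * (X t w - X s w)\<^sup>2) (\<integral>w. Z w * (A t w - A s w) \<partial>M)"
proof -
  have t: "0 \<le> t" using st by linarith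
  have [measurable]: "Z \<in> borel_measurable M"
    by (rule measurable_from_subalg[OF filtration_subalgebra[OF filt st(1)] Z(1)])
  define U where "U r w = Z w * (X r w * X r w - A r w)" for r w
  have U_int: "integrable M (U r)" if "0 \<le> r" for r
  proof -
    have "integrable M (\<lambda>w. X r w * X r w - A r w)" using W that unfolding martingale_def by blast
    then show ?thesis unfolding U_def by (rule integrable_bounded_mult[OF _ _ Z(2)]) simp
  qed
  have "integrable M (\<lambda>w. A t w - A s w)"
    by (rule Bochner_Integration.integrable_diff[OF compensator_integrable[OF X(2) W t]
          compensator_integrable[OF X(2) W st(1)]])
  then show A_int: "integrable M (\<lambda>w. Z w * (A t w - A s w))"
    by (rule integrable_bounded_mult[OF _ _ Z(2)]) simp
  have "integrable M (\<lambda>w. (X s w)\<^sup>2)" using X(2) st(1) unfolding square_integrable_def by blast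
  then have Xs_int: "integrable M (\<lambda>w. Z w * (X s w)\<^sup>2)"
    by (rule integrable_bounded_mult[OF _ _ Z(2)]) simp
  note cross = martingale_integral_mult_cross_eq[OF prob filt X st Z]
  have expand: "(\<lambda>w. Z w * (X t w - X s w)\<^sup>2) = (\<lambda>w. U t w - U s w + Z w * (A t w - A s w)
      - 2 * (Z w * (X s w * X t w)) + 2 * (Z w * (X s w)\<^sup>2))"
    unfolding U_def by (simp add: fun_eq_iff power2_eq_square algebra_simps)
  have "has_bochner_integral M (\<lambda>w. Z w * (X t w - X s w)\<^sup>2)
      ((\<integral>w. U t w \<partial>M) - (\<integral>w. U s w \<partial>M) + (\<integral>w. Z w * (A t w - A s w) \<partial>M)
        - 2 * (\<integral>w. Z w * (X s w * X t w) \<partial>M) + 2 * (\<integral>w. Z w * (X s w)\<^sup>2 \<partial>M))"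
    unfolding expand
    by (intro has_bochner_integral_add has_bochner_integral_diff has_bochner_integral_mult_right
        has_bochner_integral_integrable U_int A_int Xs_int cross(1) st(1) t)
  moreover have "(\<integral>w. U t w \<partial>M) = (\<integral>w. U s w \<partial>M)"
    unfolding U_def by (rule martingale_integral_mult_eq[OF prob filt W st Z])
  ultimately show "has_bochner_integral M (\<lambda>w. Z w * (X t w - X s w)\<^sup>2) (\<integral>w. Z w * (A t w - A s w) \<partial>M)"
    using cross(2) by simp
qed

lemma martingale_increment_conditional_chebyshev:
  fixes X A :: "real \<Rightarrow> 'a \<Rightarrow> real" and Z :: "'a \<Rightarrow> real"
  assumes prob: "prob_space M" and filt: "filtration M F"
    and X: "martingale M F X" "square_integrable M X"
    and W: "martingale M F (\<lambda>r w. X r w * X r w - A r w)"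
    and st: "0 \<le> s" "s \<le> t" and A_incr: "AE w in M. A t w - A s w \<le> L"
    and Z: "Z \<in> borel_measurable (F s)" "\<And>w. 0 \<le> Z w" "\<And>w. Z w \<le> Zb"
    and \<eta>: "0 < \<eta>"
  shows "(\<integral>w. Z w * indicator {w. \<eta> \<le> \<bar>X t w - X s w\<bar>} w \<partial>M) \<le> L / \<eta>\<^sup>2 * (\<integral>w. Z w \<partial>M)"
proof -
  interpret prob_space M by (rule prob)
  define E where "E = {w. \<eta> \<le> \<bar>X t w - X s w\<bar>}"
  have Z_abs: "\<bar>Z w\<bar> \<le> Zb" for w using Z(2,3)[of w] by linarith
  note second_moment = martingale_increment_weighted_square[OF prob filt X W st Z(1) Z_abs]
  have [measurable]: "Z \<in> borel_measurable M" "X s \<in> borel_measurable M" "X t \<in> borel_measurable M"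
    using measurable_from_subalg[OF filtration_subalgebra[OF filt st(1)] Z(1)]
      martingale_borel_measurable[OF filt X(1)] st by auto
  have Z_int: "integrable M Z"
    using Z_abs by (intro integrable_const_bound[where B=Zb]) auto
  have "(\<integral>w. Z w * indicator E w \<partial>M) \<le> (\<integral>w. Z w * (X t w - X s w)\<^sup>2 / \<eta>\<^sup>2 \<partial>M)"
  proof (rule integral_mono)
    have "(\<lambda>w. indicator E w :: real) \<in> borel_measurable M" unfolding E_def by measurable
    then show "integrable M (\<lambda>w. Z w * indicator E w)"
      using integrable_bounded_mult[OF Z_int, of "indicator E" 1] by (simp add: mult.commute)
    show "integrable M (\<lambda>w. Z w * (X t w - X s w)\<^sup>2 / \<eta>\<^sup>2)"
      using integrable.intros[OF second_moment(2)] by simp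
    show "Z w * indicator E w \<le> Z w * (X t w - X s w)\<^sup>2 / \<eta>\<^sup>2" for w
    proof (cases "w \<in> E")
      case True
      then have "\<eta>\<^sup>2 \<le> (X t w - X s w)\<^sup>2"
        using \<eta> unfolding E_def by (metis (mono_tags) abs_of_pos power2_abs power_mono less_imp_le mem_Collect_eq)
      then have "1 \<le> (X t w - X s w)\<^sup>2 / \<eta>\<^sup>2" using \<eta> by simp
      then show ?thesis using True Z(2)[of w] mult_left_mono by fastforce
    qed (simp add: Z(2))
  qed
  also have "\<dots> = (\<integral>w. Z w * (A t w - A s w) \<partial>M) / \<eta>\<^sup>2"
    using has_bochner_integral_integral_eq[OF second_moment(2)] by simp
  finally have chebyshev: "(\<integral>w. Z w * indicator E w \<partial>M) \<le> (\<integral>w. Z w * (A t w - A s w) \<partial>M) / \<eta>\<^sup>2" .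
  have "(\<integral>w. Z w * (A t w - A s w) \<partial>M) \<le> (\<integral>w. Z w * L \<partial>M)"
  proof (rule integral_mono_AE[OF second_moment(1)])
    show "integrable M (\<lambda>w. Z w * L)" using Z_int by simp
    show "AE w in M. Z w * (A t w - A s w) \<le> Z w * L"
      using A_incr by eventually_elim (simp add: Z(2) mult_left_mono)
  qed
  then have "(\<integral>w. Z w * (A t w - A s w) \<partial>M) / \<eta>\<^sup>2 \<le> L * (\<integral>w. Z w \<partial>M) / \<eta>\<^sup>2"
    by (simp add: divide_right_mono mult.commute)
  with chebyshev show ?thesis unfolding E_def by simp
qed

lemma exp_sum_indicators_integrable:
  fixes G :: "nat \<Rightarrow> 'a measure" and \<xi> :: "nat \<Rightarrow> 'a \<Rightarrow> real"
  assumes prob: "prob_space M" and sub: "\<And>i. subalgebra M (G i)"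
    and mono: "\<And>i j. i \<le> j \<Longrightarrow> sets (G i) \<subseteq> sets (G j)"
    and \<xi>_meas: "\<And>i. \<xi> i \<in> borel_measurable (G (Suc i))"
    and \<xi>_01: "\<And>i w. \<xi> i w \<in> {0, 1}"
  shows "(\<lambda>w. exp (\<Sum>i<n. \<xi> i w)) \<in> borel_measurable (G n)"
    and "exp (\<Sum>i<n. \<xi> i w) \<le> exp (real n)"
    and "integrable M (\<lambda>w. exp (\<Sum>i<n. \<xi> i w))"
proof -
  interpret prob_space M by (rule prob)
  have "\<xi> i \<in> borel_measurable (G n)" if "i < n" for i
  proof (rule measurable_from_subalg[OF _ \<xi>_meas])
    show "subalgebra (G n) (G (Suc i))"
      using sub[of n] sub[of "Suc i"] mono[of "Suc i" n] that unfolding subalgebra_def by auto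
  qed
  then show meas: "(\<lambda>w. exp (\<Sum>i<n. \<xi> i w)) \<in> borel_measurable (G n)" by measurable
  have "\<xi> i w \<le> 1" for i w using \<xi>_01[of i w] by auto
  then show bounded: "exp (\<Sum>i<n. \<xi> i w) \<le> exp (real n)" for w
    using sum_mono[of "{..<n}" "\<lambda>i. \<xi> i w" "\<lambda>_. 1"] by simp
  show "integrable M (\<lambda>w. exp (\<Sum>i<n. \<xi> i w))"
    using measurable_from_subalg[OF sub meas] bounded
    by (intro integrable_const_bound[where B="exp (real n)"]) auto
qed

lemma integral_exp_sum_indicators_le:
  fixes G :: "nat \<Rightarrow> 'a measure" and \<xi> :: "nat \<Rightarrow> 'a \<Rightarrow> real" and q :: "nat \<Rightarrow> real"
  assumes prob: "prob_space M" and sub: "\<And>i. subalgebra M (G i)"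
    and mono: "\<And>i j. i \<le> j \<Longrightarrow> sets (G i) \<subseteq> sets (G j)"
    and \<xi>_meas: "\<And>i. \<xi> i \<in> borel_measurable (G (Suc i))"
    and \<xi>_01: "\<And>i w. \<xi> i w \<in> {0, 1}"
    and cond: "\<And>i Z Zb. Z \<in> borel_measurable (G i) \<Longrightarrow> (\<And>w. 0 \<le> Z w) \<Longrightarrow> (\<And>w. Z w \<le> Zb) \<Longrightarrow>
        (\<integral>w. Z w * \<xi> i w \<partial>M) \<le> q i * (\<integral>w. Z w \<partial>M)"
  shows "(\<integral>w. exp (\<Sum>i<n. \<xi> i w) \<partial>M) \<le> exp (2 * (\<Sum>i<n. q i))"
proof (induction n)
  case 0
  show ?case using prob_space.prob_space[OF prob] by simp
next
  case (Suc n)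
  note exp_sum = exp_sum_indicators_integrable[where G=G and \<xi>=\<xi>, OF prob sub mono \<xi>_meas \<xi>_01]
  define Z where "Z w = exp (\<Sum>i<n. \<xi> i w)" for w
  have Z_nonneg: "0 \<le> Z w" for w unfolding Z_def by simp
  have Z_int: "integrable M Z" unfolding Z_def by (rule exp_sum(3))
  have "\<bar>\<xi> n w\<bar> \<le> 1" for w using \<xi>_01[of n w] by auto
  then have "integrable M (\<lambda>w. \<xi> n w * Z w)"
    by (rule integrable_bounded_mult[OF Z_int measurable_from_subalg[OF sub \<xi>_meas]])
  then have Z\<xi>_int: "integrable M (\<lambda>w. Z w * \<xi> n w)" by (simp add: mult.commute)
  \<comment> \<open>\<open>exp \<xi> \<le> 1 + 2 \<xi>\<close> for \<open>\<xi> \<in> {0, 1}\<close> since \<open>exp 1 \<le> 3\<close>\<close>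
  have step: "exp (\<Sum>i<Suc n. \<xi> i w) \<le> Z w + 2 * (Z w * \<xi> n w)" for w
  proof -
    have "exp (\<xi> n w) \<le> 1 + 2 * \<xi> n w" using \<xi>_01[of n w] exp_le by auto
    then have "Z w * exp (\<xi> n w) \<le> Z w * (1 + 2 * \<xi> n w)" using Z_nonneg by (rule mult_left_mono)
    then show ?thesis unfolding Z_def by (simp add: exp_add algebra_simps)
  qed
  have "(\<integral>w. exp (\<Sum>i<Suc n. \<xi> i w) \<partial>M) \<le> (\<integral>w. Z w + 2 * (Z w * \<xi> n w) \<partial>M)"
    by (rule integral_mono[OF exp_sum(3)]) (use Z_int Z\<xi>_int step in auto)
  also have "\<dots> = (\<integral>w. Z w \<partial>M) + 2 * (\<integral>w. Z w * \<xi> n w \<partial>M)"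
    using Z_int Z\<xi>_int by simp
  also have "\<dots> \<le> (1 + 2 * q n) * (\<integral>w. Z w \<partial>M)"
    using cond[of Z n "exp (real n)"] exp_sum(1,2) Z_nonneg unfolding Z_def
    by (simp add: algebra_simps)
  also have "\<dots> \<le> exp (2 * q n) * (\<integral>w. Z w \<partial>M)"
    using exp_ge_add_one_self[of "2 * q n"] Z_nonneg by (intro mult_right_mono) auto
  also have "\<dots> \<le> exp (2 * q n) * exp (2 * (\<Sum>i<n. q i))"
    using Suc.IH unfolding Z_def by (intro mult_left_mono) auto
  also have "\<dots> = exp (2 * (\<Sum>i<Suc n. q i))"
    by (simp add: exp_add[symmetric] algebra_simps)
  finally show ?case .
qed

lemma jump_nonzero_imp_pos: "jump f t \<noteq> 0 \<Longrightarrow> 0 < t"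
  unfolding jump_def by (simp split: if_splits)

definition partition_cell :: "real \<Rightarrow> nat \<Rightarrow> nat \<Rightarrow> real \<Rightarrow> bool" where
  "partition_cell v m i s \<longleftrightarrow> v * real i / real m < s \<and> s \<le> v * real (Suc i) / real m"

definition large_increment :: "(real \<Rightarrow> real) \<Rightarrow> real \<Rightarrow> real \<Rightarrow> nat \<Rightarrow> nat \<Rightarrow> bool" where
  "large_increment f \<eta> v m i \<longleftrightarrow> \<eta> \<le> \<bar>f (v * real (Suc i) / real m) - f (v * real i / real m)\<bar>"

definition large_increments :: "(real \<Rightarrow> real) \<Rightarrow> real \<Rightarrow> real \<Rightarrow> nat \<Rightarrow> nat" where
  "large_increments f \<eta> v m = card {i. i < m \<and> large_increment f \<eta> v m i}"

lemma partition_cell_exists: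
  assumes "0 < s" "s \<le> v" "0 < m"
  shows "\<exists>i<m. partition_cell v m i s"
proof -
  have "\<exists>i<m. (\<forall>j\<le>i. \<not> s \<le> v * real j / real m) \<and> s \<le> v * real (Suc i) / real m"
    using assms by (intro ex_least_nat_less) auto
  then show ?thesis unfolding partition_cell_def by (meson not_le order_refl)
qed

lemma partition_cell_step: "v * real (Suc i) / real m = v * real i / real m + v / real m"
  by (simp add: add_divide_distrib distrib_left)

lemma eventually_partition_cells_separate:
  assumes "s \<noteq> s'"
  shows "\<forall>\<^sub>F m in sequentially. \<forall>i. partition_cell v m i s \<longrightarrow> \<not> partition_cell v m i s'"
proof -
  have "\<forall>\<^sub>F m in sequentially. v / real m < \<bar>s - s'\<bar>"
    using order_tendstoD(2)[OF lim_const_over_n[of v]] assms by simp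
  then show ?thesis
  proof eventually_elim
    case (elim m)
    show ?case
    proof (intro allI impI notI)
      fix i assume "partition_cell v m i s" "partition_cell v m i s'"
      then have "\<bar>s - s'\<bar> < v / real m"
        using partition_cell_step[of v i m] unfolding partition_cell_def abs_less_iff by linarith
      then show False using elim by linarith
    qed
  qed
qed

lemma eventually_partition_cell_increment_large:
  fixes f :: "real \<Rightarrow> real"
  assumes f: "cadlag f" and s: "0 < s" and \<delta>: "0 < \<delta>" "\<delta> \<le> \<bar>jump f s\<bar>"
  shows "\<forall>\<^sub>F m in sequentially. \<forall>i. partition_cell v m i s \<longrightarrow> large_increment f (\<delta> / 2) v m i"
proof -
  have "\<exists>L. (f \<longlongrightarrow> L) (at_left s)" using f s unfolding cadlag_def by auto
  then obtain L where L: "(f \<longlongrightarrow> L) (at_left s)" by blast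
  have jump_L: "jump f s = f s - L"
    unfolding jump_def using s L by (simp add: tendsto_Lim)
  have "(f \<longlongrightarrow> f s) (at_right s)"
    using f s unfolding cadlag_def by (simp add: continuous_within)
  then obtain b' where b': "s < b'" "\<And>z. s < z \<Longrightarrow> z < b' \<Longrightarrow> \<bar>f z - f s\<bar> < \<delta> / 4"
    using \<delta>(1) unfolding tendsto_iff eventually_at_right_field dist_real_def
    by (metis zero_less_divide_iff zero_less_numeral)
  obtain b where b: "b < s" "\<And>z. b < z \<Longrightarrow> z < s \<Longrightarrow> \<bar>f z - L\<bar> < \<delta> / 4"
    using L \<delta>(1) unfolding tendsto_iff eventually_at_left_field dist_real_def
    by (metis zero_less_divide_iff zero_less_numeral)
  have "\<forall>\<^sub>F m in sequentially. v / real m < min (s - b) (b' - s)"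
    using order_tendstoD(2)[OF lim_const_over_n[of v], of "min (s - b) (b' - s)"] b b' by simp
  then show ?thesis
  proof eventually_elim
    case (elim m)
    define t where "t j = v * real j / real m" for j
    show ?case
    proof (intro allI impI)
      fix i assume "partition_cell v m i s"
      then have cell: "b < t i" "t i < s" "s \<le> t (Suc i)" "t (Suc i) < b'"
        using elim partition_cell_step[of v i m] unfolding partition_cell_def t_def by auto
      have "\<bar>f (t i) - L\<bar> < \<delta> / 4" using b(2) cell by blast
      moreover have "\<bar>f (t (Suc i)) - f s\<bar> < \<delta> / 4"
        using b'(2) cell \<delta>(1) by (cases "t (Suc i) = s") auto
      ultimately show "large_increment f (\<delta> / 2) v m i"
        using \<delta>(2) jump_L unfolding large_increment_def t_def by linarith
    qed
  qed
qed

lemma eventually_card_le_large_increments: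
  fixes f :: "real \<Rightarrow> real"
  assumes f: "cadlag f" and \<delta>: "0 < \<delta>" and S: "finite S" "S \<subseteq> {0<..v}"
    and jumps: "\<And>s. s \<in> S \<Longrightarrow> \<delta> \<le> \<bar>jump f s\<bar>"
  shows "\<forall>\<^sub>F m in sequentially. card S \<le> large_increments f (\<delta> / 2) v m"
proof -
  define cell where "cell m s = (SOME i. i < m \<and> partition_cell v m i s)" for m s
  have cell: "cell m s < m \<and> partition_cell v m (cell m s) s" if "s \<in> S" "0 < m" for m s
  proof -
    have "\<exists>i. i < m \<and> partition_cell v m i s"
      using partition_cell_exists[of s v m] S(2) that by auto
    then show ?thesis unfolding cell_def by (rule someI_ex)
  qed
  have "\<forall>\<^sub>F m in sequentially. 0 < m" by (rule eventually_gt_at_top)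
  moreover have "\<forall>\<^sub>F m in sequentially. \<forall>s\<in>S. \<forall>i. partition_cell v m i s \<longrightarrow> large_increment f (\<delta> / 2) v m i"
    using S jumps by (intro eventually_ball_finite ballI eventually_partition_cell_increment_large[OF f _ \<delta>]) auto
  moreover have "\<forall>\<^sub>F m in sequentially. \<forall>(s, s')\<in>S \<times> S. s \<noteq> s' \<longrightarrow>
      (\<forall>i. partition_cell v m i s \<longrightarrow> \<not> partition_cell v m i s')"
    using S(1) by (intro eventually_ball_finite) (auto intro: eventually_partition_cells_separate)
  ultimately show ?thesis
  proof eventually_elim
    case (elim m)
    have "inj_on (cell m) S"
    proof (rule inj_onI)
      fix s s' assume s: "s \<in> S" "s' \<in> S" "cell m s = cell m s'"
      then show "s = s'"
        using bspec[OF elim(3), of "(s, s')"] cell[OF s(1) elim(1)] cell[OF s(2) elim(1)] by auto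
    qed
    moreover have "cell m ` S \<subseteq> {i. i < m \<and> large_increment f (\<delta> / 2) v m i}"
      using elim(1,2) cell by blast
    ultimately show ?case
      unfolding large_increments_def by (intro card_inj_on_le) auto
  qed
qed

lemma eventually_njumps_le_large_increments:
  fixes f :: "real \<Rightarrow> real"
  assumes f: "cadlag f" and \<delta>: "0 < \<delta>"
    and jumps: "\<And>t. 0 \<le> t \<Longrightarrow> jump f t \<noteq> 0 \<Longrightarrow> \<delta> \<le> \<bar>jump f t\<bar>"
  shows "\<forall>\<^sub>F m in sequentially. njumps f {u..v} \<le> large_increments f (\<delta> / 2) v m"
proof -
  define S where "S = {t \<in> {u..v}. jump f t \<noteq> 0}"
  show ?thesis
  proof (cases "finite S")
    case True
    have "S \<subseteq> {0<..v}" "\<And>s. s \<in> S \<Longrightarrow> \<delta> \<le> \<bar>jump f s\<bar>"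
      using jumps jump_nonzero_imp_pos unfolding S_def by force+
    from eventually_card_le_large_increments[OF f \<delta> True this]
    show ?thesis unfolding njumps_def S_def .
  qed (simp add: njumps_def S_def) \<comment> \<open>an infinite jump set has \<open>card\<close> 0\<close>
qed

lemma integral_exp_large_increments_le:
  fixes X A :: "real \<Rightarrow> 'a \<Rightarrow> real"
  assumes prob: "prob_space M" and filt: "filtration M F"
    and X: "martingale M F X" "square_integrable M X"
    and W: "martingale M F (\<lambda>r w. X r w * X r w - A r w)"
    and A_incr: "\<And>r r'. 0 \<le> r \<Longrightarrow> r \<le> r' \<Longrightarrow> AE w in M. A r' w - A r w \<le> L * (r' - r)"
    and L: "0 \<le> L" and v: "0 \<le> v" and \<eta>: "0 < \<eta>"
  shows "integrable M (\<lambda>w. exp (real (large_increments (\<lambda>t. X t w) \<eta> v m)))"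
    and "(\<integral>w. exp (real (large_increments (\<lambda>t. X t w) \<eta> v m)) \<partial>M) \<le> exp (2 * L * v / \<eta>\<^sup>2)"
proof -
  define t where "t i = v * real i / real m" for i
  define \<xi> :: "nat \<Rightarrow> 'a \<Rightarrow> real"
    where "\<xi> i w = indicator {w. \<eta> \<le> \<bar>X (t (Suc i)) w - X (t i) w\<bar>} w" for i w
  have t_nonneg: "0 \<le> t i" for i unfolding t_def using v by simp
  have t_mono: "t i \<le> t j" if "i \<le> j" for i j
    unfolding t_def using v that by (intro divide_right_mono mult_left_mono) auto
  have t_step: "t (Suc i) - t i = v / real m" for i
    unfolding t_def by (simp add: diff_divide_distrib[symmetric] algebra_simps)
  have count: "(\<lambda>w. exp (real (large_increments (\<lambda>t. X t w) \<eta> v m))) = (\<lambda>w. exp (\<Sum>i<m. \<xi> i w))"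
    unfolding large_increments_def large_increment_def \<xi>_def t_def indicator_def by (simp add: Int_def)
  define q where "q = L * (v / real m) / \<eta>\<^sup>2"
  have sum_q: "(\<Sum>i<m. q) \<le> L * v / \<eta>\<^sup>2"
    unfolding q_def using L v by (cases "m = 0") auto
  have sub: "subalgebra M (F (t i))" for i by (rule filtration_subalgebra[OF filt t_nonneg])
  have mono: "sets (F (t i)) \<subseteq> sets (F (t j))" if "i \<le> j" for i j
    using filtration_subalgebra_later[OF filt t_nonneg t_mono[OF that]] unfolding subalgebra_def by blast
  have \<xi>_meas: "\<xi> i \<in> borel_measurable (F (t (Suc i)))" for i
    using martingale_measurable[OF filt X(1) t_nonneg order.refl, of "Suc i"]
      martingale_measurable[OF filt X(1) t_nonneg t_mono[of i "Suc i"]]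
    unfolding \<xi>_def by measurable
  have \<xi>_01: "\<xi> i w \<in> {0, 1}" for i w unfolding \<xi>_def by (simp split: split_indicator)
  have cond: "(\<integral>w. Z w * \<xi> i w \<partial>M) \<le> q * (\<integral>w. Z w \<partial>M)"
    if "Z \<in> borel_measurable (F (t i))" "\<And>w. 0 \<le> Z w" "\<And>w. Z w \<le> Zb" for i Z Zb
  proof -
    have step: "t i \<le> t (Suc i)" by (rule t_mono) simp
    have "AE w in M. A (t (Suc i)) w - A (t i) w \<le> L * (v / real m)"
      using A_incr[OF t_nonneg step] unfolding t_step .
    then show ?thesis
      unfolding \<xi>_def q_def
      by (rule martingale_increment_conditional_chebyshev[OF prob filt X W t_nonneg step _ that \<eta>])
  qed
  have "integrable M (\<lambda>w. exp (\<Sum>i<m. \<xi> i w))"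
    by (rule exp_sum_indicators_integrable[where G="\<lambda>i. F (t i)", OF prob sub mono \<xi>_meas \<xi>_01])
  moreover have "(\<integral>w. exp (\<Sum>i<m. \<xi> i w) \<partial>M) \<le> exp (2 * (\<Sum>i<m. q))"
    by (rule integral_exp_sum_indicators_le[where G="\<lambda>i. F (t i)" and q="\<lambda>_. q"];
        (rule prob sub mono \<xi>_meas \<xi>_01 cond | assumption)+)
  ultimately show "integrable M (\<lambda>w. exp (real (large_increments (\<lambda>t. X t w) \<eta> v m)))"
    and "(\<integral>w. exp (real (large_increments (\<lambda>t. X t w) \<eta> v m)) \<partial>M) \<le> exp (2 * L * v / \<eta>\<^sup>2)"
    using sum_q unfolding count by (auto intro: order_trans)
qed

lemma powr_le_ceiling_power_mult_exp:
  fixes y p :: real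
  assumes y: "0 \<le> y" and p: "1 \<le> p"
  shows "y powr p \<le> real (nat \<lceil>p\<rceil>) ^ nat \<lceil>p\<rceil> * exp y"
proof -
  define P where "P = nat \<lceil>p\<rceil>"
  have P: "1 \<le> P" "p \<le> real P" using p unfolding P_def by linarith+
  have "y powr p \<le> real P ^ P * exp y"
  proof (cases "y \<le> 1")
    case True
    have "y powr p \<le> 1 powr p" using True y p by (intro powr_mono2) auto
    also have "\<dots> \<le> real P ^ P * exp y"
    proof -
      have "1 \<le> real P ^ P" "1 \<le> exp y" using P(1) y by simp_all
      then show ?thesis using mult_mono[of 1 "real P ^ P" 1 "exp y"] by simp
    qed
    finally show ?thesis .
  next
    case False
    have "y powr p \<le> y powr real P" using False P by (intro powr_mono) auto
    also have "\<dots> = y ^ P" using False by (simp add: powr_realpow)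
    also have "\<dots> \<le> (real P * exp (y / real P)) ^ P"
    proof (rule power_mono)
      show "y \<le> real P * exp (y / real P)"
        using exp_ge_add_one_self[of "y / real P"] P(1) by (simp add: field_simps)
    qed (use y in simp)
    also have "\<dots> = real P ^ P * exp y"
      using P(1) by (simp add: power_mult_distrib exp_of_nat_mult[symmetric])
    finally show ?thesis .
  qed
  then show ?thesis unfolding P_def .
qed

lemma nn_integral_le_of_eventually_dominated:
  fixes f :: "'a \<Rightarrow> real" and Y :: "nat \<Rightarrow> 'a \<Rightarrow> real"
  assumes dom: "AE w in M. \<forall>\<^sub>F m in sequentially. f w \<le> Y m w"
    and Y: "\<And>m. integrable M (Y m)" "\<And>m w. 0 \<le> Y m w" "\<And>m. (\<integral>w. Y m w \<partial>M) \<le> K"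
  shows "(\<integral>\<^sup>+w. ennreal (f w) \<partial>M) \<le> ennreal K"
proof -
  have "(\<integral>\<^sup>+w. ennreal (f w) \<partial>M) \<le> (\<integral>\<^sup>+w. liminf (\<lambda>m. ennreal (Y m w)) \<partial>M)"
  proof (rule nn_integral_mono_AE)
    show "AE w in M. ennreal (f w) \<le> liminf (\<lambda>m. ennreal (Y m w))"
      using dom
    proof eventually_elim
      case (elim w)
      then have "\<forall>\<^sub>F m in sequentially. ennreal (f w) \<le> ennreal (Y m w)"
        by eventually_elim (rule ennreal_leI)
      then show ?case by (rule Liminf_bounded)
    qed
  qed
  also have "\<dots> \<le> liminf (\<lambda>m. \<integral>\<^sup>+w. ennreal (Y m w) \<partial>M)"
  proof (rule nn_integral_liminf)
    show "(\<lambda>w. ennreal (Y m w)) \<in> borel_measurable M" for m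
      using borel_measurable_integrable[OF Y(1)] by measurable
  qed
  also have "\<dots> \<le> ennreal K"
  proof (rule Liminf_le)
    have "(\<integral>\<^sup>+w. ennreal (Y m w) \<partial>M) = ennreal (\<integral>w. Y m w \<partial>M)" for m
      using Y(1,2) by (intro nn_integral_eq_integral) auto
    then show "\<forall>\<^sub>F m in sequentially. (\<integral>\<^sup>+w. ennreal (Y m w) \<partial>M) \<le> ennreal K"
      using Y(3) by (simp add: ennreal_leI)
  qed simp
  finally show ?thesis .
qed

lemma nn_integral_njumps_powr_le:
  fixes X A :: "real \<Rightarrow> 'a \<Rightarrow> real"
  assumes prob: "prob_space M" and filt: "filtration M F"
    and X: "martingale M F X" "square_integrable M X"
    and W: "martingale M F (\<lambda>r w. X r w * X r w - A r w)"
    and paths: "\<forall>w\<in>space M. cadlag (\<lambda>t. X t w)"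
    and A_incr: "\<And>r r'. 0 \<le> r \<Longrightarrow> r \<le> r' \<Longrightarrow> AE w in M. A r' w - A r w \<le> L * (r' - r)"
    and jumps: "AE w in M. \<forall>t\<ge>0. jump (\<lambda>s. X s w) t \<noteq> 0 \<longrightarrow> \<delta> \<le> \<bar>jump (\<lambda>s. X s w) t\<bar>"
    and L: "0 \<le> L" and v: "0 \<le> v" and \<delta>: "0 < \<delta>" and p: "1 \<le> p"
    and \<Lambda>: "8 * L * v / \<delta>\<^sup>2 \<le> \<Lambda>"
  shows "(\<integral>\<^sup>+w. ennreal (real (njumps (\<lambda>t. X t w) {u..v}) powr p) \<partial>M)
           \<le> ennreal (real (nat \<lceil>p\<rceil>) ^ nat \<lceil>p\<rceil> * exp \<Lambda>)"
proof (rule nn_integral_le_of_eventually_dominated)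
  define K where "K = real (nat \<lceil>p\<rceil>) ^ nat \<lceil>p\<rceil>"
  define Y where "Y m w = K * exp (real (large_increments (\<lambda>t. X t w) (\<delta> / 2) v m))" for m w
  have K: "0 \<le> K" unfolding K_def by simp
  note exp_moment = integral_exp_large_increments_le[OF prob filt X W A_incr L v half_gt_zero[OF \<delta>]]
  show "integrable M (Y m)" "0 \<le> Y m w" for m w
    using exp_moment(1)[of m] K unfolding Y_def by simp_all
  have "2 * L * v / (\<delta> / 2)\<^sup>2 \<le> \<Lambda>" using \<Lambda> by (simp add: power_divide)
  then have "(\<integral>w. exp (real (large_increments (\<lambda>t. X t w) (\<delta> / 2) v m)) \<partial>M) \<le> exp \<Lambda>" for m
    using exp_moment(2)[of m] by (meson exp_le_cancel_iff order_trans)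
  then show "(\<integral>w. Y m w \<partial>M) \<le> K * exp \<Lambda>" for m
    unfolding Y_def using K by (simp add: mult_left_mono)
  show "AE w in M. \<forall>\<^sub>F m in sequentially. real (njumps (\<lambda>t. X t w) {u..v}) powr p \<le> Y m w"
    using jumps AE_space
  proof eventually_elim
    case (elim w)
    have "\<forall>\<^sub>F m in sequentially. njumps (\<lambda>t. X t w) {u..v} \<le> large_increments (\<lambda>t. X t w) (\<delta> / 2) v m"
      using paths elim \<delta> by (intro eventually_njumps_le_large_increments) auto
    then show ?case
    proof eventually_elim
      case (elim m)
      have "real (njumps (\<lambda>t. X t w) {u..v}) powr p \<le> K * exp (real (njumps (\<lambda>t. X t w) {u..v}))"
        unfolding K_def using p by (intro powr_le_ceiling_power_mult_exp) auto
      also have "\<dots> \<le> Y m w" unfolding Y_def using elim K by (intro mult_left_mono) auto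
      finally show ?case .
    qed
  qed
qed

lemma set_integral_increment_le:
  fixes g :: "real \<Rightarrow> real"
  assumes meas: "set_borel_measurable lborel {0..t} g" and bound: "\<And>x. 0 \<le> x \<Longrightarrow> \<bar>g x\<bar> \<le> C"
    and st: "0 \<le> s" "s \<le> t"
  shows "(LINT x:{0..t}|lborel. g x) - (LINT x:{0..s}|lborel. g x) \<le> C * (t - s)"
proof -
  have int_t: "set_integrable lborel {0..t} g"
    unfolding set_integrable_def
    by (rule integrableI_bounded_set[where A="{0..t}" and B=C])
       (use meas bound st in \<open>auto simp: set_borel_measurable_def\<close>)
  have int_st: "set_integrable lborel {s<..t} g"
    using st by (intro set_integrable_subset[OF int_t]) auto
  have "{0..t} = {0..s} \<union> {s<..t}" using st by auto
  then have "(LINT x:{0..t}|lborel. g x) = (LINT x:{0..s} \<union> {s<..t}|lborel. g x)" by simp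
  also have "\<dots> = (LINT x:{0..s}|lborel. g x) + (LINT x:{s<..t}|lborel. g x)"
    by (rule set_integral_Un) (use st int_st in \<open>auto intro: set_integrable_subset[OF int_t]\<close>)
  finally have "(LINT x:{0..t}|lborel. g x) = (LINT x:{0..s}|lborel. g x) + (LINT x:{s<..t}|lborel. g x)" .
  moreover have "(LINT x:{s<..t}|lborel. g x) \<le> (LINT x:{s<..t}|lborel. C)"
    using int_st st
    by (intro set_integral_mono) (auto simp: set_integrable_def intro!: abs_le_D1[OF bound])
  ultimately show ?thesis using st by (simp add: set_lebesgue_integral_def mult.commute)
qed

lemma progressive_path_set_borel_measurable:
  assumes prog: "progressive M F g" and filt: "filtration M F" and "0 \<le> t" and w: "w \<in> space M"
  shows "set_borel_measurable lborel {0..t} (\<lambda>s. g s w)"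
proof -
  have "space (F t) = space M"
    using filtration_subalgebra[OF filt \<open>0 \<le> t\<close>] unfolding subalgebra_def by simp
  then have "(\<lambda>s. (s, w)) \<in> measurable (restrict_space borel {0..t}) (restrict_space (borel \<Otimes>\<^sub>M F t) ({0..t} \<times> space M))"
    using w by (intro measurable_restrict_space3 measurable_Pair2') auto
  moreover have "(\<lambda>(s, w). g s w) \<in> borel_measurable (restrict_space (borel \<Otimes>\<^sub>M F t) ({0..t} \<times> space M))"
    using prog \<open>0 \<le> t\<close> unfolding progressive_def by blast
  ultimately have "(\<lambda>s. g s w) \<in> borel_measurable (restrict_space borel {0..t})"
    by (auto dest: measurable_comp simp: o_def)
  then show ?thesis
    unfolding set_borel_measurable_def by (subst (asm) borel_measurable_restrict_space_iff) auto
qed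

lemma progressive_integral_increment_le:
  assumes filt: "filtration M F" and prog: "progressive M F g"
    and bound: "AE w in M. \<forall>s\<ge>0. \<bar>g s w\<bar> \<le> C" and "0 \<le> \<kappa>" "0 \<le> r" "r \<le> r'"
  shows "AE w in M. \<kappa> * (LINT s:{0..r'}|lborel. g s w) - \<kappa> * (LINT s:{0..r}|lborel. g s w)
                      \<le> \<bar>C\<bar> * \<kappa> * (r' - r)"
  using bound AE_space
proof eventually_elim
  case (elim w)
  have "(LINT s:{0..r'}|lborel. g s w) - (LINT s:{0..r}|lborel. g s w) \<le> \<bar>C\<bar> * (r' - r)"
  proof (rule set_integral_increment_le)
    show "set_borel_measurable lborel {0..r'} (\<lambda>s. g s w)"
      using assms(5,6) elim(2) by (intro progressive_path_set_borel_measurable[OF prog filt]) auto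
    show "\<bar>g s w\<bar> \<le> \<bar>C\<bar>" if "0 \<le> s" for s using elim(1) that by force
  qed (use assms in auto)
  then have "\<kappa> * ((LINT s:{0..r'}|lborel. g s w) - (LINT s:{0..r}|lborel. g s w)) \<le> \<kappa> * (\<bar>C\<bar> * (r' - r))"
    by (rule mult_left_mono) fact
  then show ?case by (simp add: right_diff_distrib mult_ac)
qed

lemma power_mult_inverse_powr:
  fixes x k :: real
  assumes "0 < x"
  shows "x ^ d * (1 / x) powr (real d + 2 * k) = ((1 / x) powr k)\<^sup>2"
proof -
  have "(1 / x) powr (real d + 2 * k) = (1 / x) ^ d * ((1 / x) powr k)\<^sup>2"
    using assms by (simp add: powr_add powr_realpow powr_power)
  then show ?thesis using assms by (simp add: power_one_over)
qed

theorem lemma2p5: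
  fixes M :: "'a measure" and F :: "real \<Rightarrow> 'a measure"
    and MM :: "nat \<Rightarrow> (nat \<Rightarrow> nat) \<Rightarrow> real \<Rightarrow> 'a \<Rightarrow> real"
    and CC Cd :: "nat \<Rightarrow> (nat \<Rightarrow> nat) \<Rightarrow> real \<Rightarrow> 'a \<Rightarrow> real"
    and d :: nat and k c C :: real
  assumes prob: "prob_space M"
    and filt: "filtration M F"
    and usual: "usual_conditions M F"
    and d_pos: "d \<ge> 1"
    and mart: "\<And>N x. N \<ge> 1 \<Longrightarrow> x \<in> lattice N d \<Longrightarrow>
        martingale M F (MM N x) \<and> square_integrable M (MM N x) \<and>
        (\<forall>\<omega>\<in>space M. cadlag (\<lambda>t. MM N x t \<omega>))"
    and A1_cross: "\<And>N x y. N \<ge> 1 \<Longrightarrow> x \<in> lattice N d \<Longrightarrow> y \<in> lattice N d \<Longrightarrow> x \<noteq> y \<Longrightarrow>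
        is_pred_qcov M F (MM N x) (MM N y) (\<lambda>t \<omega>. 0)"
    and A1_diag: "\<And>N x. N \<ge> 1 \<Longrightarrow> x \<in> lattice N d \<Longrightarrow>
        is_pred_qcov M F (MM N x) (MM N x)
          (\<lambda>t \<omega>. real N ^ d * (LINT s:{0..t}|lborel. CC N x s \<omega>))"
    and A1_prog: "\<And>N x. N \<ge> 1 \<Longrightarrow> x \<in> lattice N d \<Longrightarrow> progressive M F (CC N x)"
    and A1_bound: "\<And>N. N \<ge> 1 \<Longrightarrow>
        AE \<omega> in M. \<forall>x\<in>lattice N d. \<forall>s\<ge>0. \<bar>CC N x s \<omega>\<bar> \<le> C"
    and A2: "\<And>N T. N \<ge> 1 \<Longrightarrow> T > 0 \<Longrightarrow>
        AE \<omega> in M. \<forall>x\<in>lattice N d. \<forall>y\<in>lattice N d. x \<noteq> y \<longrightarrow>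
          (\<forall>t\<in>{0..T}. jump (\<lambda>s. MM N x s \<omega>) t * jump (\<lambda>s. MM N y s \<omega>) t = 0)"
    and k_bound: "k > - real d / 2"
    and c_pos: "c > 0"
    and A3: "\<And>N. N \<ge> 1 \<Longrightarrow>
        AE \<omega> in M. \<forall>x\<in>lattice N d. \<forall>t\<ge>0. jump (\<lambda>s. MM N x s \<omega>) t \<noteq> 0 \<longrightarrow>
          \<bar>jump (\<lambda>s. MM N x s \<omega>) t\<bar> = c * (1 / real N) powr k"
    and A4: "\<And>N. N \<ge> 1 \<Longrightarrow>
        AE \<omega> in M. \<forall>x\<in>lattice N d. \<forall>t\<ge>0.
          MM N x t \<omega> = (\<Sum>s\<in>{s\<in>{0..t}. jump (\<lambda>r. MM N x r \<omega>) s \<noteq> 0}. jump (\<lambda>r. MM N x r \<omega>) s)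
            - real N powr (k + real d) * (LINT s:{0..t}|lborel. Cd N x s \<omega>)"
    and A4_prog: "\<And>N x. N \<ge> 1 \<Longrightarrow> x \<in> lattice N d \<Longrightarrow> progressive M F (Cd N x)"
    and A4_bound: "\<And>N. N \<ge> 1 \<Longrightarrow>
        AE \<omega> in M. \<forall>x\<in>lattice N d. \<forall>s\<ge>0. \<bar>Cd N x s \<omega>\<bar> \<le> C"
  shows "\<forall>p\<ge>1. \<forall>B\<ge>0. \<exists>K::real. \<forall>a b. 0 \<le> a \<longrightarrow> a \<le> b \<longrightarrow> b \<le> B \<longrightarrow>
           (\<forall>N\<ge>1. \<forall>x\<in>lattice N d.
              (\<integral>\<^sup>+ \<omega>. ennreal (real (njumps (\<lambda>t. MM N x t \<omega>)
                   {(1 / real N) powr (real d + 2 * k) * a .. (1 / real N) powr (real d + 2 * k) * b}) powr p) \<partial>M)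
              \<le> ennreal K)"
proof (intro allI impI exI ballI)
  fix p B a b :: real and N :: nat and x
  assume p: "1 \<le> p" and "0 \<le> B" and a: "0 \<le> a" and ab: "a \<le> b" and bB: "b \<le> B"
    and N: "1 \<le> N" and x: "x \<in> lattice N d"
  define \<delta> where "\<delta> = c * (1 / real N) powr k"
  define A where "A r w = real N ^ d * (LINT s:{0..r}|lborel. CC N x s w)" for r w
  have W: "martingale M F (\<lambda>r w. MM N x r w * MM N x r w - A r w)"
    using A1_diag[OF N x] unfolding is_pred_qcov_def A_def by blast
  have "AE w in M. \<forall>s\<ge>0. \<bar>CC N x s w\<bar> \<le> C"
    using A1_bound[OF N] by eventually_elim (use x in blast)
  from progressive_integral_increment_le[OF filt A1_prog[OF N x] this]
  have A_incr: "AE w in M. A r' w - A r w \<le> \<bar>C\<bar> * real N ^ d * (r' - r)" if "0 \<le> r" "r \<le> r'" for r r'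
    using that unfolding A_def by simp
  have jumps: "AE w in M. \<forall>t\<ge>0. jump (\<lambda>s. MM N x s w) t \<noteq> 0 \<longrightarrow> \<delta> \<le> \<bar>jump (\<lambda>s. MM N x s w) t\<bar>"
    using A3[OF N] unfolding \<delta>_def by eventually_elim (use x in force)
  have \<delta>: "0 < \<delta>" unfolding \<delta>_def using N c_pos by simp
  define v where "v = (1 / real N) powr (real d + 2 * k) * b"
  have "8 * (\<bar>C\<bar> * real N ^ d) * v / \<delta>\<^sup>2 = 8 * \<bar>C\<bar> * b / c\<^sup>2"
    using power_mult_inverse_powr[of "real N" d k] N c_pos unfolding v_def \<delta>_def
    by (simp add: power_mult_distrib field_simps)
  also have "\<dots> \<le> 8 * \<bar>C\<bar> * B / c\<^sup>2"
    using bB by (intro divide_right_mono mult_left_mono) auto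
  finally have \<Lambda>: "8 * (\<bar>C\<bar> * real N ^ d) * v / \<delta>\<^sup>2 \<le> 8 * \<bar>C\<bar> * B / c\<^sup>2" .
  show "(\<integral>\<^sup>+ \<omega>. ennreal (real (njumps (\<lambda>t. MM N x t \<omega>)
           {(1 / real N) powr (real d + 2 * k) * a .. (1 / real N) powr (real d + 2 * k) * b}) powr p) \<partial>M)
        \<le> ennreal (real (nat \<lceil>p\<rceil>) ^ nat \<lceil>p\<rceil> * exp (8 * \<bar>C\<bar> * B / c\<^sup>2))"
    using mart[OF N x] a ab p unfolding v_def[symmetric]
    by (intro nn_integral_njumps_powr_le[OF prob filt _ _ W _ A_incr jumps _ _ \<delta> _ \<Lambda>]) (auto simp: v_def)
qed

end
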